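(* Let $s\in\{1/2,1,3/2,\dots\}$, $N=2s$, and let $C,D$ be linear operators on $\mathcal{H}_s$ with Majorana polynomials $p_C,p_D$. Then \[ \mathrm{Tr}(CD)=(N!)^{-2}\,p_C(\partial^a,\partial_a)\,p_D(z_a,z^a), \] where $p_C(\partial^a,\partial_a)$ is the constant-coefficient differential operator obtained from $p_C(z_1,z_2,z^1,z^2)$ by replacing each $z_a$ by $\partial^a=\partial/\partial z^a$ and each $z^a$ by $\partial_a=\partial/\partial z_a$. In particular, if $\mathrm{Tr}(CD)=0$ then $p_C(\partial^a,\partial_a)p_D(z)=0$.
   Context: $\mathcal{H}_s$ is the spin-$s$ Hilbert space with orthonormal $S_z$-eigenbasis $\{|s,m\rangle\}_{m=-s}^{s}$. Treat $z_1,z_2,z^1,z^2$ as four independent complex variables (formally $z^a=\overline{z_a}$), with $\partial_a z_b=\partial^a z^b=\delta_{ab}$, $\partial_a z^b=\partial^a z_b=0$. Define $\langle -\mathbf n_B|=\sum_{m=-s}^{s}(-1)^{s-m}\sqrt{\binom{2s}{s-m}}\,z_1^{s+m}z_2^{s-m}\langle s,m|$ and $|-\mathbf n_B\rangle=\sum_{m=-s}^{s}(-1)^{s-m}\sqrt{\binom{2s}{s-m}}\,(z^1)^{s+m}(z^2)^{s-m}|s,m\rangle$. The Majorana polynomial of an operator $C$ on $\mathcal{H}_s$ is $p_C(z)=\langle -\mathbf n_B|C|-\mathbf n_B\rangle$. *)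

theory Defs
  imports Complex_Main "HOL-Library.Groups_Big_Fun"
begin

text \<open>Spin-s Hilbert space, N = 2s.  The basis vector |s,m> (m = -s..s) is indexed by
  i = s + m in {0..N}.  An operator C on H_s is given by its matrix entries
  C i j = <s, i - s| C |s, j - s>  (only i, j \<le> N are relevant).\<close>

definition op_trace :: "nat \<Rightarrow> (nat \<Rightarrow> nat \<Rightarrow> complex) \<Rightarrow> complex" where
  "op_trace N A = (\<Sum>i\<in>{0..N}. A i i)"

definition op_comp :: "nat \<Rightarrow> (nat \<Rightarrow> nat \<Rightarrow> complex) \<Rightarrow> (nat \<Rightarrow> nat \<Rightarrow> complex)
    \<Rightarrow> (nat \<Rightarrow> nat \<Rightarrow> complex)" where
  "op_comp N C D = (\<lambda>i k. \<Sum>j\<in>{0..N}. C i j * D j k)"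

text \<open>Polynomials in the four independent variables z_1, z_2, z^1, z^2, given by their
  (finitely supported) coefficient functions on exponent tuples (e1, e2, e3, e4),
  meaning the monomial z_1^e1 z_2^e2 (z^1)^e3 (z^2)^e4.\<close>

type_synonym expo = "nat \<times> nat \<times> nat \<times> nat"
type_synonym poly4 = "expo \<Rightarrow> complex"

definition monom4 :: "expo \<Rightarrow> complex \<Rightarrow> poly4" where
  "monom4 e c = (\<lambda>e'. if e' = e then c else 0)"

text \<open>Majorana polynomial p_C = <-n_B| C |-n_B>, with
  <-n_B| = sum_i (-1)^(N-i) sqrt(binom N (N-i)) z_1^i z_2^(N-i) <i|  and
  |-n_B> = sum_j (-1)^(N-j) sqrt(binom N (N-j)) (z^1)^j (z^2)^(N-j) |j>.\<close>

definition majorana :: "nat \<Rightarrow> (nat \<Rightarrow> nat \<Rightarrow> complex) \<Rightarrow> poly4" where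
  "majorana N C = (\<lambda>e. \<Sum>i\<in>{0..N}. \<Sum>j\<in>{0..N}.
      monom4 (i, N - i, j, N - j)
        (((-1) ^ (N - i) * complex_of_real (sqrt (real (N choose (N - i)))))
         * C i j
         * ((-1) ^ (N - j) * complex_of_real (sqrt (real (N choose (N - j)))))) e)"

text \<open>k-th derivative of x^n: coefficient n!/(n-k)! (and exponent n-k), zero if k > n.\<close>

definition dcoef :: "nat \<Rightarrow> nat \<Rightarrow> complex" where
  "dcoef n k = (if k \<le> n then of_nat (fact n div fact (n - k)) else 0)"

text \<open>The constant-coefficient operator obtained from the monomial
  z_1^a z_2^b (z^1)^c (z^2)^d by z_a \<mapsto> \<partial>^a = \<partial>/\<partial>z^a, z^a \<mapsto> \<partial>_a = \<partial>/\<partial>z_a, i.e.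
  (\<partial>/\<partial>z^1)^a (\<partial>/\<partial>z^2)^b (\<partial>/\<partial>z_1)^c (\<partial>/\<partial>z_2)^d, applied to the monomial
  z_1^e z_2^f (z^1)^g (z^2)^h; result given as a polynomial.\<close>

fun diff_monom :: "expo \<Rightarrow> expo \<Rightarrow> poly4" where
  "diff_monom (a, b, c, d) (e, f, g, h) =
     monom4 (e - c, f - d, g - a, h - b)
       (dcoef e c * dcoef f d * dcoef g a * dcoef h b)"

definition apply_diffop :: "poly4 \<Rightarrow> poly4 \<Rightarrow> poly4" where
  "apply_diffop p q = (\<lambda>m. Sum_any (\<lambda>(\<alpha>, \<beta>). p \<alpha> * q \<beta> * diff_monom \<alpha> \<beta> m))"

definition const4 :: "complex \<Rightarrow> poly4" where
  "const4 c = monom4 (0, 0, 0, 0) c"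

end

theory Submission
  imports Defs
begin

text \<open>Applying the operator of z_1^a z_2^b (z^1)^c (z^2)^d to a monomial of the same bidegree
  gives zero unless that monomial is z_1^c z_2^d (z^1)^a (z^2)^b, and then it gives the constant
  a! b! c! d!.  Hence p_C(\<partial>^a, \<partial>_a) p_D only pairs the coefficient w_i C_ij w_j of
  z_1^i z_2^(N-i) (z^1)^j (z^2)^(N-j) in p_C with the coefficient w_j D_ji w_i of
  z_1^j z_2^(N-j) (z^1)^i (z^2)^(N-i) in p_D, where w_i = \<plusminus>sqrt(binom N i).  The factorials
  i! (N-i)! turn each w_i^2 into N!, leaving (N!)^2 \<Sum> C_ij D_ji = (N!)^2 Tr(CD).\<close>

lemma monom4_zero [simp]: "monom4 e 0 = (\<lambda>_. 0)"
  by (simp add: monom4_def fun_eq_iff)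

lemma dcoef_self: "dcoef n n = of_nat (fact n)"
  by (simp add: dcoef_def)

lemma dcoef_eq_0: "n < k \<Longrightarrow> dcoef n k = 0"
  by (simp add: dcoef_def)

lemma diff_monom_same_degree:
  assumes "a + b = g + h" and "c + d = e + f"
  shows "diff_monom (a, b, c, d) (e, f, g, h) =
    (if (e, f, g, h) = (c, d, a, b) then const4 (of_nat (fact a * fact b * fact c * fact d))
     else (\<lambda>_. 0))"
proof (cases "(e, f, g, h) = (c, d, a, b)")
  case True
  then show ?thesis by (auto simp: dcoef_self const4_def mult_ac)
next
  case False
  with assms have "e < c \<or> f < d \<or> g < a \<or> h < b" by auto
  then show ?thesis using False by (auto simp: dcoef_eq_0)
qed

lemma sum_monom4_at:
  assumes "finite A" "inj_on f A" "x \<in> A"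
  shows "(\<Sum>y\<in>A. monom4 (f y) (a y) (f x)) = a x"
proof -
  have "(\<Sum>y\<in>A. monom4 (f y) (a y) (f x)) = (\<Sum>y\<in>A. if y = x then a y else 0)"
    using assms(2,3) by (intro sum.cong) (auto simp: monom4_def inj_on_eq_iff)
  then show ?thesis using assms(1,3) by simp
qed

lemma sum_monom4_outside: "\<alpha> \<notin> f ` A \<Longrightarrow> (\<Sum>y\<in>A. monom4 (f y) (a y) \<alpha>) = 0"
  by (rule sum.neutral) (auto simp: monom4_def)

lemma apply_diffop_sum_monom4:
  assumes "finite A" "finite B" "inj_on f A" "inj_on g B"
  shows "apply_diffop (\<lambda>\<alpha>. \<Sum>x\<in>A. monom4 (f x) (a x) \<alpha>) (\<lambda>\<beta>. \<Sum>y\<in>B. monom4 (g y) (b y) \<beta>) m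
    = (\<Sum>x\<in>A. \<Sum>y\<in>B. a x * b y * diff_monom (f x) (g y) m)"
proof -
  define P where "P = (\<lambda>\<alpha>. \<Sum>x\<in>A. monom4 (f x) (a x) \<alpha>)"
  define Q where "Q = (\<lambda>\<beta>. \<Sum>y\<in>B. monom4 (g y) (b y) \<beta>)"
  define t where "t = (\<lambda>(\<alpha>, \<beta>). P \<alpha> * Q \<beta> * diff_monom \<alpha> \<beta> m)"
  have P_outside: "P \<alpha> = 0" if "\<alpha> \<notin> f ` A" for \<alpha>
    using that by (simp add: P_def sum_monom4_outside)
  have Q_outside: "Q \<beta> = 0" if "\<beta> \<notin> g ` B" for \<beta>
    using that by (simp add: Q_def sum_monom4_outside)
  have support: "{p. t p \<noteq> 0} \<subseteq> f ` A \<times> g ` B"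
    using P_outside Q_outside by (force simp: t_def)
  have "apply_diffop P Q m = Sum_any t"
    by (simp add: apply_diffop_def t_def)
  also have "\<dots> = sum t (f ` A \<times> g ` B)"
    using assms(1,2) support by (intro Sum_any.expand_superset) auto
  also have "\<dots> = (\<Sum>\<alpha>\<in>f ` A. \<Sum>\<beta>\<in>g ` B. t (\<alpha>, \<beta>))"
    by (rule sum.cartesian_product')
  also have "\<dots> = (\<Sum>x\<in>A. \<Sum>y\<in>B. t (f x, g y))"
    using assms(3,4) by (simp add: sum.reindex)
  also have "\<dots> = (\<Sum>x\<in>A. \<Sum>y\<in>B. a x * b y * diff_monom (f x) (g y) m)"
  proof (intro sum.cong refl)
    fix x y assume "x \<in> A" "y \<in> B"
    then have "P (f x) = a x" "Q (g y) = b y"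
      using assms by (simp_all only: P_def Q_def sum_monom4_at)
    then show "t (f x, g y) = a x * b y * diff_monom (f x) (g y) m"
      by (simp add: t_def)
  qed
  finally show ?thesis by (simp add: P_def Q_def)
qed

definition majorana_weight :: "nat \<Rightarrow> nat \<Rightarrow> complex" where
  "majorana_weight N i = (-1) ^ (N - i) * complex_of_real (sqrt (real (N choose (N - i))))"

lemma majorana_weight_sq_fact:
  assumes "i \<le> N"
  shows "(majorana_weight N i)\<^sup>2 * of_nat (fact i * fact (N - i)) = of_nat (fact N)"
proof -
  have "(majorana_weight N i)\<^sup>2 = of_nat (N choose (N - i))"
    by (simp add: majorana_weight_def power_mult_distrib flip: power_mult of_real_power)
  moreover have "(N choose (N - i)) * (fact i * fact (N - i)) = fact N"
    using binomial_fact_lemma [OF assms] binomial_symmetric [OF assms] by (simp add: mult_ac)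
  ultimately show ?thesis by (metis of_nat_mult)
qed

lemma majorana_as_sum:
  "majorana N C = (\<lambda>\<alpha>. \<Sum>(i, j)\<in>{0..N} \<times> {0..N}.
     monom4 (i, N - i, j, N - j) (majorana_weight N i * C i j * majorana_weight N j) \<alpha>)"
  by (simp add: majorana_def majorana_weight_def sum.cartesian_product)

lemma op_trace_op_comp:
  "op_trace N (op_comp N C D) = (\<Sum>(i, j)\<in>{0..N} \<times> {0..N}. C i j * D j i)"
  by (simp add: op_trace_def op_comp_def sum.cartesian_product)

lemma sum_const4: "(\<Sum>x\<in>A. const4 (c x) m) = const4 (\<Sum>x\<in>A. c x) m"
  by (simp add: const4_def monom4_def)

lemma apply_diffop_majorana:
  "apply_diffop (majorana N C) (majorana N D)
     = const4 ((of_nat (fact N))\<^sup>2 * op_trace N (op_comp N C D))"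
proof
  fix m
  define S where "S = {0..N} \<times> {0..N}"
  define e :: "nat \<times> nat \<Rightarrow> expo" where "e = (\<lambda>(i, j). (i, N - i, j, N - j))"
  define w where "w = majorana_weight N"
  define coeff where "coeff = (\<lambda>X (i, j). w i * X i j * w j)"
  define F where "F = (\<lambda>(i, j). of_nat (fact i * fact (N - i) * fact j * fact (N - j)) :: complex)"
  have majorana_eq: "majorana N X = (\<lambda>\<alpha>. \<Sum>p\<in>S. monom4 (e p) (coeff X p) \<alpha>)" for X
    by (simp add: majorana_as_sum S_def e_def coeff_def w_def case_prod_unfold)
  have "inj_on e S"
    by (auto simp: inj_on_def S_def e_def)
  then have "apply_diffop (majorana N C) (majorana N D) m
      = (\<Sum>p\<in>S. \<Sum>q\<in>S. coeff C p * coeff D q * diff_monom (e p) (e q) m)"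
    by (simp add: majorana_eq apply_diffop_sum_monom4 S_def)
  also have "\<dots> = (\<Sum>p\<in>S. \<Sum>q\<in>S.
      if q = prod.swap p then coeff C p * coeff D q * const4 (F p) m else 0)"
  proof (intro sum.cong refl, clarify)
    fix i j k l assume "(i, j) \<in> S" "(k, l) \<in> S"
    then have degrees: "i + (N - i) = l + (N - l)" "j + (N - j) = k + (N - k)"
      by (auto simp: S_def)
    have "diff_monom (e (i, j)) (e (k, l))
        = (if (k, l) = prod.swap (i, j) then const4 (F (i, j)) else (\<lambda>_. 0))"
      using diff_monom_same_degree [OF degrees]
      by (auto simp del: diff_monom.simps simp: e_def F_def mult_ac)
    then show "coeff C (i, j) * coeff D (k, l) * diff_monom (e (i, j)) (e (k, l)) m
        = (if (k, l) = prod.swap (i, j) then coeff C (i, j) * coeff D (k, l) * const4 (F (i, j)) m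
           else 0)"
      by simp
  qed
  also have "\<dots> = (\<Sum>p\<in>S. coeff C p * coeff D (prod.swap p) * const4 (F p) m)"
    by (intro sum.cong refl) (auto simp: S_def)
  also have "\<dots> = (\<Sum>(i, j)\<in>S. const4 ((of_nat (fact N))\<^sup>2 * (C i j * D j i)) m)"
  proof (intro sum.cong refl, clarify)
    fix i j assume "(i, j) \<in> S"
    then have "i \<le> N" "j \<le> N" by (auto simp: S_def)
    have "coeff C (i, j) * coeff D (j, i) * F (i, j)
        = ((w i)\<^sup>2 * of_nat (fact i * fact (N - i))) * ((w j)\<^sup>2 * of_nat (fact j * fact (N - j)))
          * (C i j * D j i)"
      by (simp add: coeff_def F_def power2_eq_square mult_ac)
    also have "\<dots> = (of_nat (fact N))\<^sup>2 * (C i j * D j i)"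
      unfolding w_def majorana_weight_sq_fact [OF \<open>i \<le> N\<close>] majorana_weight_sq_fact [OF \<open>j \<le> N\<close>]
      by (simp add: power2_eq_square)
    finally show "coeff C (i, j) * coeff D (prod.swap (i, j)) * const4 (F (i, j)) m
        = const4 ((of_nat (fact N))\<^sup>2 * (C i j * D j i)) m"
      by (simp add: const4_def monom4_def)
  qed
  also have "\<dots> = const4 ((of_nat (fact N))\<^sup>2 * op_trace N (op_comp N C D)) m"
    by (simp add: sum_const4 op_trace_op_comp S_def case_prod_unfold sum_distrib_left)
  finally show "apply_diffop (majorana N C) (majorana N D) m
      = const4 ((of_nat (fact N))\<^sup>2 * op_trace N (op_comp N C D)) m" .
qed

theorem lemma2:
  fixes N :: nat and C D :: "nat \<Rightarrow> nat \<Rightarrow> complex"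
  assumes "N \<ge> 1"
  shows "const4 (op_trace N (op_comp N C D))
           = (\<lambda>m. (1 / (of_nat (fact N))\<^sup>2) * apply_diffop (majorana N C) (majorana N D) m)
       \<and> (op_trace N (op_comp N C D) = 0
           \<longrightarrow> apply_diffop (majorana N C) (majorana N D) = (\<lambda>_. 0))"
  by (simp add: apply_diffop_majorana const4_def monom4_def fun_eq_iff)

end
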